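(* Let $p$ be an odd prime and $G_1=\langle a\rangle+\langle b\rangle+\langle c\rangle$ the additively written group with $ap=bp=cp=0$, $a+b=b+a+c$, $c$ central; write elements as $x=ax_1+bx_2+cx_3$ ($0\le x_i<p$). For maps $\beta,\gamma\colon G_1\to\mathbb Z_p$ define $$x\cdot y=ax_1y_1+b(x_2y_1+\beta(x)y_2)+c\Big(-x_1x_2\tbinom{y_1}{2}+x_3y_1+\gamma(x)y_2+x_1\beta(x)y_3\Big).$$ Then each of the following choices of $(\beta,\gamma)$ occurs as the pair of maps of a local nearring $(G_1,+,\cdot)$ with identity $a$ (where $x\cdot b=b\beta(x)+c\gamma(x)$): 1) $\beta(x)=x_1^{\,i}$ and $\gamma(x)=0$, for $0<i<p$; 2) $\beta(x)=1$ and $\gamma(x)=0$; 3) $\beta(x)=x_1^2$ and $\gamma(x)=x_1x_2$.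
   Context: A (left) nearring is a set $R$ with operations $+,\cdot$ such that $(R,+)$ is a group, $(R,\cdot)$ a semigroup, and $x(y+z)=xy+xz$ for all $x,y,z$. A nearring with identity is local if its non-invertible elements form a subgroup of $(R,+)$. Additive notation: $gk$ is $g$ added $k$ times; coefficients are read modulo $p$. *)

theory Defs
  imports "HOL-Algebra.Group" "HOL-Computational_Algebra.Primes"
begin

definition add_grp :: "'a set \<Rightarrow> ('a \<Rightarrow> 'a \<Rightarrow> 'a) \<Rightarrow> 'a \<Rightarrow> 'a monoid" where
  "add_grp R add z = \<lparr>carrier = R, monoid.mult = add, one = z\<rparr>"

definition nearring :: "'a set \<Rightarrow> ('a \<Rightarrow> 'a \<Rightarrow> 'a) \<Rightarrow> 'a \<Rightarrow> ('a \<Rightarrow> 'a \<Rightarrow> 'a) \<Rightarrow> bool" where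
  "nearring R add z mul \<longleftrightarrow>
     group (add_grp R add z) \<and>
     (\<forall>x\<in>R. \<forall>y\<in>R. mul x y \<in> R) \<and>
     (\<forall>x\<in>R. \<forall>y\<in>R. \<forall>w\<in>R. mul (mul x y) w = mul x (mul y w)) \<and>
     (\<forall>x\<in>R. \<forall>y\<in>R. \<forall>w\<in>R. mul x (add y w) = add (mul x y) (mul x w))"

definition local_nearring_with_identity ::
  "'a set \<Rightarrow> ('a \<Rightarrow> 'a \<Rightarrow> 'a) \<Rightarrow> 'a \<Rightarrow> ('a \<Rightarrow> 'a \<Rightarrow> 'a) \<Rightarrow> 'a \<Rightarrow> bool" where
  "local_nearring_with_identity R add z mul e \<longleftrightarrow>
     nearring R add z mul \<and> e \<in> R \<and>
     (\<forall>x\<in>R. mul e x = x \<and> mul x e = x) \<and>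
     subgroup {x \<in> R. \<not> (\<exists>y\<in>R. mul x y = e \<and> mul y x = e)} (add_grp R add z)"

text \<open>The element a x1 + b x2 + c x3 (normal form, 0 \<le> xi < p) is the triple (x1,x2,x3).\<close>
definition G1 :: "int \<Rightarrow> (int \<times> int \<times> int) set" where
  "G1 p = {(x1, x2, x3). 0 \<le> x1 \<and> x1 < p \<and> 0 \<le> x2 \<and> x2 < p \<and> 0 \<le> x3 \<and> x3 < p}"

text \<open>Addition derived from a+b = b+a+c, c central:
  (a x1+b x2+c x3)+(a y1+b y2+c y3) = a(x1+y1) + b(x2+y2) + c(x3+y3-x2 y1).\<close>
definition addG :: "int \<Rightarrow> int \<times> int \<times> int \<Rightarrow> int \<times> int \<times> int \<Rightarrow> int \<times> int \<times> int" where
  "addG p x y = (case x of (x1, x2, x3) \<Rightarrow> case y of (y1, y2, y3) \<Rightarrow>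
      ((x1 + y1) mod p, (x2 + y2) mod p, (x3 + y3 - x2 * y1) mod p))"

definition zeroG :: "int \<times> int \<times> int" where "zeroG = (0, 0, 0)"

definition genA :: "int \<times> int \<times> int" where "genA = (1, 0, 0)"

text \<open>The multiplication determined by beta, gamma (maps G_1 \<rightarrow> Z_p, values read mod p);
  binom(y1,2) = y1 (y1-1) div 2 with 0 \<le> y1 < p.\<close>
definition mulG :: "int \<Rightarrow> (int \<times> int \<times> int \<Rightarrow> int) \<Rightarrow> (int \<times> int \<times> int \<Rightarrow> int)
    \<Rightarrow> int \<times> int \<times> int \<Rightarrow> int \<times> int \<times> int \<Rightarrow> int \<times> int \<times> int" where
  "mulG p \<beta> \<gamma> x y = (case x of (x1, x2, x3) \<Rightarrow> case y of (y1, y2, y3) \<Rightarrow>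
      ((x1 * y1) mod p,
       (x2 * y1 + \<beta> x * y2) mod p,
       (- x1 * x2 * (y1 * (y1 - 1) div 2) + x3 * y1 + \<gamma> x * y2 + x1 * \<beta> x * y3) mod p))"

end

theory Submission
  imports Defs "HOL-Number_Theory.Cong"
begin

(* Over the integers the formulas for addition and multiplication make sense without reduction
   mod p. Writing binom2 n for n(n-1)/2, the identities binom2 (m + n) = binom2 m + binom2 n + m n
   and binom2 (m n) = m^2 binom2 n + binom2 m n make left distributivity an exact identity, and
   associativity an exact identity as soon as the coefficient pair attached to a product xy is
   (beta x beta y, gamma x beta y + x1 beta x gamma y). For odd p, binom2 respects congruence
   mod p, so all of this descends to G1.
   An element with x1 <> 0 (so that beta x is a unit) has a right inverse, obtained by solving
   the three coordinate equations one after another; as all such elements are right invertible,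
   they are units. If x1 = 0, every product xy has first coordinate 0, so x is not a unit. Hence
   the non-units form the kernel of x |-> x1, a subgroup. For the three pairs (beta, gamma) of the
   theorem, beta depends multiplicatively on x1 alone and the condition on gamma is a direct
   computation. *)

definition binom2 :: "int \<Rightarrow> int" where
  "binom2 n = n * (n - 1) div 2"

lemma two_binom2: "2 * binom2 n = n * (n - 1)"
  unfolding binom2_def by simp

lemma binom2_one [simp]: "binom2 1 = 0"
  by (simp add: binom2_def)

lemma binom2_add: "binom2 (m + n) = binom2 m + binom2 n + m * n"
  using two_binom2[of "m + n"] two_binom2[of m] two_binom2[of n] by (simp add: algebra_simps)

lemma binom2_mult: "binom2 (m * n) = m\<^sup>2 * binom2 n + binom2 m * n"
proof -
  have "2 * (m\<^sup>2 * binom2 n + binom2 m * n) = m\<^sup>2 * (2 * binom2 n) + (2 * binom2 m) * n"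
    by (simp add: algebra_simps)
  also have "\<dots> = 2 * binom2 (m * n)"
    unfolding two_binom2 by (simp add: algebra_simps power2_eq_square)
  finally show ?thesis by simp
qed

lemma binom2_cong:
  fixes p :: int
  assumes "odd p" and "[m = n] (mod p)"
  shows "[binom2 m = binom2 n] (mod p)"
proof -
  have "coprime 2 p" using assms(1) by simp
  moreover have "[2 * binom2 m = 2 * binom2 n] (mod p)"
    unfolding two_binom2 by (intro cong_mult cong_diff assms(2) cong_refl)
  ultimately show ?thesis by (simp add: cong_mult_lcancel)
qed

definition reduce :: "int \<Rightarrow> int \<times> int \<times> int \<Rightarrow> int \<times> int \<times> int" where
  "reduce p x = (case x of (x1, x2, x3) \<Rightarrow> (x1 mod p, x2 mod p, x3 mod p))"

(* The formulas of addG and mulG before reduction mod p; b and g stand for beta x and gamma x. *)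

fun addZ :: "int \<times> int \<times> int \<Rightarrow> int \<times> int \<times> int \<Rightarrow> int \<times> int \<times> int" where
  "addZ (x1, x2, x3) (y1, y2, y3) = (x1 + y1, x2 + y2, x3 + y3 - x2 * y1)"

fun negZ :: "int \<times> int \<times> int \<Rightarrow> int \<times> int \<times> int" where
  "negZ (x1, x2, x3) = (- x1, - x2, - x3 - x1 * x2)"

fun mulZ :: "int \<Rightarrow> int \<Rightarrow> int \<times> int \<times> int \<Rightarrow> int \<times> int \<times> int \<Rightarrow> int \<times> int \<times> int" where
  "mulZ b g (x1, x2, x3) (y1, y2, y3) =
     (x1 * y1, x2 * y1 + b * y2, - x1 * x2 * binom2 y1 + x3 * y1 + g * y2 + x1 * b * y3)"

lemma addZ_assoc: "addZ (addZ x y) z = addZ x (addZ y z)"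
  by (cases x; cases y; cases z) (simp add: algebra_simps)

lemma addZ_negZ: "addZ (negZ x) x = (0, 0, 0)"
  by (cases x) (simp add: algebra_simps)

lemma mulZ_assoc:
  "mulZ (b * b') (g * b' + fst x * b * g') (mulZ b g x y) z = mulZ b g x (mulZ b' g' y z)"
  by (cases x; cases y; cases z) (simp add: binom2_mult algebra_simps power2_eq_square)

lemma mulZ_addZ: "mulZ b g x (addZ y z) = addZ (mulZ b g x y) (mulZ b g x z)"
  by (cases x; cases y; cases z) (simp add: binom2_add algebra_simps)

lemma reduce_eq_iff:
  "reduce p (x1, x2, x3) = reduce p (y1, y2, y3) \<longleftrightarrow>
     [x1 = y1] (mod p) \<and> [x2 = y2] (mod p) \<and> [x3 = y3] (mod p)"
  by (simp add: reduce_def cong_def)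

lemma reduce_reduce [simp]: "reduce p (reduce p u) = reduce p u"
  by (cases u) (simp add: reduce_def)

lemma reduce_G1: "x \<in> G1 p \<Longrightarrow> reduce p x = x"
  by (cases x) (auto simp: reduce_def G1_def)

lemma reduce_in_G1: "p > 0 \<Longrightarrow> reduce p x \<in> G1 p"
  by (cases x) (simp add: reduce_def G1_def)

lemma addG_eq_reduce_addZ: "addG p x y = reduce p (addZ x y)"
  by (cases x; cases y) (simp add: addG_def reduce_def)

lemma mulG_eq_reduce_mulZ: "mulG p \<beta> \<gamma> x y = reduce p (mulZ (\<beta> x) (\<gamma> x) x y)"
  by (cases x; cases y) (simp add: mulG_def reduce_def binom2_def)

lemma reduce_addZ_cong:
  assumes "reduce p u = reduce p u'" and "reduce p v = reduce p v'"
  shows "reduce p (addZ u v) = reduce p (addZ u' v')"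
  using assms
  by (cases u; cases u'; cases v; cases v')
    (simp only: addZ.simps reduce_eq_iff, blast intro: cong_add cong_diff cong_mult)

lemma reduce_mulZ_cong:
  assumes "odd p" and "[b = b'] (mod p)" and "[g = g'] (mod p)"
    and "reduce p u = reduce p u'" and "reduce p v = reduce p v'"
  shows "reduce p (mulZ b g u v) = reduce p (mulZ b' g' u' v')"
  using assms
  by (cases u; cases u'; cases v; cases v')
    (simp only: mulZ.simps reduce_eq_iff,
     blast intro: cong_add cong_mult binom2_cong cong_minus_minus_iff[THEN iffD2] cong_refl)

lemma reduce_mulZ_cong_coeffs:
  assumes "[b = b'] (mod p)" and "[g = g'] (mod p)"
  shows "reduce p (mulZ b g u v) = reduce p (mulZ b' g' u v)"
  using assms
  by (cases u; cases v)
    (simp only: mulZ.simps reduce_eq_iff, blast intro: cong_add cong_mult cong_refl)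

abbreviation G1_group :: "int \<Rightarrow> (int \<times> int \<times> int) monoid" where
  "G1_group p \<equiv> add_grp (G1 p) (addG p) zeroG"

lemma addG_closed: "p > 0 \<Longrightarrow> addG p x y \<in> G1 p"
  by (simp add: addG_eq_reduce_addZ reduce_in_G1)

lemma addG_assoc: "addG p (addG p x y) z = addG p x (addG p y z)"
  unfolding addG_eq_reduce_addZ
  by (metis addZ_assoc reduce_addZ_cong reduce_reduce)

lemma zeroG_in_G1: "p > 0 \<Longrightarrow> zeroG \<in> G1 p"
  by (simp add: zeroG_def G1_def)

lemma addG_zeroG_left: "addG p zeroG x = x" if "x \<in> G1 p"
proof -
  have "addZ zeroG x = x" by (cases x) (simp add: zeroG_def)
  then show ?thesis using that by (simp add: addG_eq_reduce_addZ reduce_G1)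
qed

lemma addG_negZ_left: "addG p (reduce p (negZ x)) x = zeroG"
proof -
  have "addG p (reduce p (negZ x)) x = reduce p (addZ (negZ x) x)"
    unfolding addG_eq_reduce_addZ by (rule reduce_addZ_cong) simp_all
  then show ?thesis by (simp add: addZ_negZ reduce_def zeroG_def)
qed

lemma group_G1:
  assumes "p > 0"
  shows "group (G1_group p)"
proof (rule groupI)
  fix x assume "x \<in> carrier (G1_group p)"
  then show "\<exists>y \<in> carrier (G1_group p). y \<otimes>\<^bsub>G1_group p\<^esub> x = \<one>\<^bsub>G1_group p\<^esub>"
    using addG_negZ_left[of p x] reduce_in_G1[OF assms, of "negZ x"]
    by (simp add: add_grp_def) blast
qed (use assms in \<open>auto simp: add_grp_def addG_closed addG_assoc zeroG_in_G1 addG_zeroG_left\<close>)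

lemma inv_add_grp_G1:
  assumes "p > 0" and "x \<in> G1 p"
  shows "inv\<^bsub>G1_group p\<^esub> x = reduce p (negZ x)"
  using group.inv_equality[OF group_G1[OF assms(1)]] addG_negZ_left reduce_in_G1[OF assms(1)] assms(2)
  by (simp add: add_grp_def)

lemma subgroup_fst_zero:
  assumes "p > 0"
  shows "subgroup {x \<in> G1 p. fst x = 0} (G1_group p)"
proof (rule group.subgroupI[OF group_G1[OF assms]])
  show "{x \<in> G1 p. fst x = 0} \<noteq> {}"
    using zeroG_in_G1[OF assms] by (auto simp: zeroG_def)
next
  fix x assume "x \<in> {x \<in> G1 p. fst x = 0}"
  then show "inv\<^bsub>G1_group p\<^esub> x \<in> {x \<in> G1 p. fst x = 0}"
    using assms by (cases x) (simp add: inv_add_grp_G1 reduce_in_G1, simp add: reduce_def)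
next
  fix x y assume "x \<in> {x \<in> G1 p. fst x = 0}" and "y \<in> {x \<in> G1 p. fst x = 0}"
  then show "x \<otimes>\<^bsub>G1_group p\<^esub> y \<in> {x \<in> G1 p. fst x = 0}"
    using assms by (cases x; cases y) (simp add: add_grp_def addG_closed, simp add: addG_def)
qed (auto simp: add_grp_def)

lemma mulG_closed: "p > 0 \<Longrightarrow> mulG p \<beta> \<gamma> x y \<in> G1 p"
  by (simp add: mulG_eq_reduce_mulZ reduce_in_G1)

lemma fst_mulG: "fst (mulG p \<beta> \<gamma> x y) = fst x * fst y mod p"
  by (cases x; cases y) (simp add: mulG_def)

lemma mulG_assoc:
  assumes "odd p"
    and "[\<beta> (mulG p \<beta> \<gamma> x y) = \<beta> x * \<beta> y] (mod p)"
    and "[\<gamma> (mulG p \<beta> \<gamma> x y) = \<gamma> x * \<beta> y + fst x * \<beta> x * \<gamma> y] (mod p)"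
  shows "mulG p \<beta> \<gamma> (mulG p \<beta> \<gamma> x y) z = mulG p \<beta> \<gamma> x (mulG p \<beta> \<gamma> y z)"
proof -
  let ?w = "mulG p \<beta> \<gamma> x y"
  have "mulG p \<beta> \<gamma> ?w z = reduce p (mulZ (\<beta> ?w) (\<gamma> ?w) ?w z)"
    by (rule mulG_eq_reduce_mulZ)
  also have "\<dots> = reduce p (mulZ (\<beta> x * \<beta> y) (\<gamma> x * \<beta> y + fst x * \<beta> x * \<gamma> y) (mulZ (\<beta> x) (\<gamma> x) x y) z)"
    by (rule reduce_mulZ_cong[OF assms]) (simp_all add: mulG_eq_reduce_mulZ)
  also have "\<dots> = reduce p (mulZ (\<beta> x) (\<gamma> x) x (mulZ (\<beta> y) (\<gamma> y) y z))"
    by (simp only: mulZ_assoc)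
  also have "\<dots> = reduce p (mulZ (\<beta> x) (\<gamma> x) x (mulG p \<beta> \<gamma> y z))"
    by (rule reduce_mulZ_cong) (simp_all add: assms mulG_eq_reduce_mulZ)
  also have "\<dots> = mulG p \<beta> \<gamma> x (mulG p \<beta> \<gamma> y z)"
    by (rule mulG_eq_reduce_mulZ[symmetric])
  finally show ?thesis .
qed

lemma mulG_addG_distrib:
  assumes "odd p"
  shows "mulG p \<beta> \<gamma> x (addG p y z) = addG p (mulG p \<beta> \<gamma> x y) (mulG p \<beta> \<gamma> x z)"
proof -
  have "mulG p \<beta> \<gamma> x (addG p y z) = reduce p (mulZ (\<beta> x) (\<gamma> x) x (addZ y z))"
    unfolding mulG_eq_reduce_mulZ addG_eq_reduce_addZ
    by (rule reduce_mulZ_cong) (simp_all add: assms)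
  also have "\<dots> = reduce p (addZ (mulZ (\<beta> x) (\<gamma> x) x y) (mulZ (\<beta> x) (\<gamma> x) x z))"
    by (simp only: mulZ_addZ)
  also have "\<dots> = addG p (mulG p \<beta> \<gamma> x y) (mulG p \<beta> \<gamma> x z)"
    unfolding mulG_eq_reduce_mulZ addG_eq_reduce_addZ
    by (rule reduce_addZ_cong) simp_all
  finally show ?thesis .
qed

lemma mulG_genA_left:
  assumes "[\<beta> genA = 1] (mod p)" and "[\<gamma> genA = 0] (mod p)" and "x \<in> G1 p"
  shows "mulG p \<beta> \<gamma> genA x = x"
proof -
  have "mulG p \<beta> \<gamma> genA x = reduce p (mulZ 1 0 genA x)"
    unfolding mulG_eq_reduce_mulZ using assms(1,2) by (rule reduce_mulZ_cong_coeffs)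
  also have "mulZ 1 0 genA x = x"
    by (cases x) (simp add: genA_def)
  finally show ?thesis using assms(3) by (simp add: reduce_G1)
qed

lemma mulG_genA_right: "mulG p \<beta> \<gamma> x genA = x" if "x \<in> G1 p"
proof -
  have "mulZ b g x genA = x" for b g
    by (cases x) (simp add: genA_def)
  then show ?thesis using that by (simp add: mulG_eq_reduce_mulZ reduce_G1)
qed

lemma coprime_fst_G1:
  assumes "prime p" and "x \<in> G1 p" and "fst x \<noteq> 0"
  shows "coprime (fst x) p"
proof -
  have "0 < fst x" and "fst x < p"
    using assms(2,3) by (cases x; auto simp: G1_def)+
  then have "\<not> p dvd fst x" by (auto dest: zdvd_imp_le)
  then show ?thesis using assms(1) by (simp add: prime_imp_coprime coprime_commute)
qed

lemma mulG_right_inverse: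
  assumes "prime p" and "odd p" and "x \<in> G1 p" and "fst x \<noteq> 0" and "coprime (\<beta> x) p"
  shows "\<exists>y \<in> G1 p. fst y \<noteq> 0 \<and> mulG p \<beta> \<gamma> x y = genA"
proof -
  obtain x1 x2 x3 where x: "x = (x1, x2, x3)" by (cases x)
  define b g where "b = \<beta> x" and "g = \<gamma> x"
  have "coprime x1 p" and "coprime b p"
    using coprime_fst_G1[OF assms(1,3,4)] assms(5) by (simp_all add: x b_def)
  then obtain u v t where u: "[x1 * u = 1] (mod p)" and v: "[b * v = 1] (mod p)"
    and t: "[x1 * b * t = 1] (mod p)"
    by (metis cong_solve_coprime_int coprime_mult_left_iff)
  define y2 where "y2 = - x2 * u * v"
  define D where "D = x1 * x2 * binom2 u - x3 * u - g * y2"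
  define y3 where "y3 = D * t"
  have "[x2 * u + b * y2 = 0] (mod p)"
  proof -
    have "x2 * u + b * y2 = x2 * u - x2 * u * (b * v)"
      by (simp add: y2_def algebra_simps)
    also have "[\<dots> = x2 * u - x2 * u * 1] (mod p)"
      by (intro cong_diff cong_mult v cong_refl)
    finally show ?thesis by simp
  qed
  moreover have "[- x1 * x2 * binom2 u + x3 * u + g * y2 + x1 * b * y3 = 0] (mod p)"
  proof -
    have "- x1 * x2 * binom2 u + x3 * u + g * y2 + x1 * b * y3 = - D + D * (x1 * b * t)"
      by (simp add: D_def y3_def algebra_simps)
    also have "[\<dots> = - D + D * 1] (mod p)"
      by (intro cong_add cong_mult t cong_refl)
    finally show ?thesis by simp
  qed
  ultimately have "reduce p (mulZ b g x (u, y2, y3)) = reduce p genA"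
    using u by (simp add: x genA_def reduce_eq_iff)
  moreover have "p > 1" using assms(1) by (simp add: prime_gt_1_int)
  moreover have "mulG p \<beta> \<gamma> x (reduce p (u, y2, y3)) = reduce p (mulZ b g x (u, y2, y3))"
    unfolding mulG_eq_reduce_mulZ b_def g_def
    by (rule reduce_mulZ_cong[OF assms(2)]) simp_all
  ultimately have "mulG p \<beta> \<gamma> x (reduce p (u, y2, y3)) = genA"
    by (simp add: reduce_def genA_def)
  moreover have "fst (reduce p (u, y2, y3)) \<noteq> 0"
  proof
    assume "fst (reduce p (u, y2, y3)) = 0"
    then have "[u = 0] (mod p)" by (simp add: reduce_def cong_def)
    then have "[x1 * u = x1 * 0] (mod p)" by (rule cong_scalar_left)
    with u \<open>p > 1\<close> show False by (simp add: cong_def)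
  qed
  ultimately show ?thesis using reduce_in_G1 \<open>p > 1\<close> by auto
qed

locale G1_nearring_maps =
  fixes p :: int and \<beta> \<gamma> :: "int \<times> int \<times> int \<Rightarrow> int"
  assumes prime_p: "prime p" and odd_p: "odd p"
    and beta_mulG: "x \<in> G1 p \<Longrightarrow> y \<in> G1 p \<Longrightarrow> [\<beta> (mulG p \<beta> \<gamma> x y) = \<beta> x * \<beta> y] (mod p)"
    and gamma_mulG: "x \<in> G1 p \<Longrightarrow> y \<in> G1 p \<Longrightarrow>
      [\<gamma> (mulG p \<beta> \<gamma> x y) = \<gamma> x * \<beta> y + fst x * \<beta> x * \<gamma> y] (mod p)"
    and beta_genA: "[\<beta> genA = 1] (mod p)"
    and gamma_genA: "[\<gamma> genA = 0] (mod p)"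
    and coprime_beta: "x \<in> G1 p \<Longrightarrow> fst x \<noteq> 0 \<Longrightarrow> coprime (\<beta> x) p"
begin

lemma p_gt_1: "p > 1"
  using prime_p by (simp add: prime_gt_1_int)

lemma mulG_assoc_G1:
  "x \<in> G1 p \<Longrightarrow> y \<in> G1 p \<Longrightarrow> mulG p \<beta> \<gamma> (mulG p \<beta> \<gamma> x y) z = mulG p \<beta> \<gamma> x (mulG p \<beta> \<gamma> y z)"
  by (rule mulG_assoc[OF odd_p beta_mulG gamma_mulG])

lemma nearring: "nearring (G1 p) (addG p) zeroG (mulG p \<beta> \<gamma>)"
  unfolding nearring_def
  using p_gt_1 group_G1 mulG_closed mulG_assoc_G1 mulG_addG_distrib[OF odd_p] by simp

lemma invertible_iff_fst_nonzero:
  assumes "x \<in> G1 p"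
  shows "(\<exists>y \<in> G1 p. mulG p \<beta> \<gamma> x y = genA \<and> mulG p \<beta> \<gamma> y x = genA) \<longleftrightarrow> fst x \<noteq> 0"
proof
  assume "\<exists>y \<in> G1 p. mulG p \<beta> \<gamma> x y = genA \<and> mulG p \<beta> \<gamma> y x = genA"
  then obtain y where "mulG p \<beta> \<gamma> x y = genA" by blast
  then have "fst (mulG p \<beta> \<gamma> x y) = 1" by (simp add: genA_def)
  then show "fst x \<noteq> 0" by (auto simp: fst_mulG)
next
  assume x: "fst x \<noteq> 0"
  obtain y where y: "y \<in> G1 p" "fst y \<noteq> 0" and xy: "mulG p \<beta> \<gamma> x y = genA"
    using mulG_right_inverse[where \<beta> = \<beta> and \<gamma> = \<gamma>, OF prime_p odd_p assms x coprime_beta[OF assms x]] by blast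
  obtain z where z: "z \<in> G1 p" and yz: "mulG p \<beta> \<gamma> y z = genA"
    using mulG_right_inverse[where \<beta> = \<beta> and \<gamma> = \<gamma>, OF prime_p odd_p y coprime_beta[OF y]] by blast
  have "x = mulG p \<beta> \<gamma> x (mulG p \<beta> \<gamma> y z)"
    using yz mulG_genA_right[OF assms] by simp
  also have "\<dots> = z"
    using mulG_assoc_G1[OF assms y(1)] xy mulG_genA_left[where \<beta> = \<beta> and \<gamma> = \<gamma>, OF beta_genA gamma_genA z] by simp
  finally show "\<exists>y \<in> G1 p. mulG p \<beta> \<gamma> x y = genA \<and> mulG p \<beta> \<gamma> y x = genA"
    using y(1) xy yz by blast
qed

theorem local_nearring: "local_nearring_with_identity (G1 p) (addG p) zeroG (mulG p \<beta> \<gamma>) genA"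
proof -
  have "{x \<in> G1 p. \<not> (\<exists>y \<in> G1 p. mulG p \<beta> \<gamma> x y = genA \<and> mulG p \<beta> \<gamma> y x = genA)}
      = {x \<in> G1 p. fst x = 0}"
    using invertible_iff_fst_nonzero by blast
  moreover have "genA \<in> G1 p"
    using p_gt_1 by (simp add: genA_def G1_def)
  ultimately show ?thesis
    unfolding local_nearring_with_identity_def
    using nearring mulG_genA_left[where \<beta> = \<beta> and \<gamma> = \<gamma>, OF beta_genA gamma_genA] mulG_genA_right
      subgroup_fst_zero p_gt_1 by simp
qed

end

lemma power_fst_mulG_cong:
  "[(\<lambda>(x1, x2, x3). x1 ^ i mod p) (mulG p \<beta> \<gamma> x y)
    = (\<lambda>(x1, x2, x3). x1 ^ i mod p) x * (\<lambda>(x1, x2, x3). x1 ^ i mod p) y] (mod p)"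
  by (simp add: prod.case_eq_if fst_mulG cong_def mod_simps power_mult_distrib)

lemma coprime_power_fst_G1:
  assumes "prime p" and "x \<in> G1 p" and "fst x \<noteq> 0"
  shows "coprime ((\<lambda>(x1, x2, x3). x1 ^ i mod p) x) p"
  using coprime_fst_G1[OF assms] assms(1) by (simp add: prod.case_eq_if)

lemma G1_nearring_maps_power:
  assumes "prime p" and "odd p"
  shows "G1_nearring_maps p (\<lambda>(x1, x2, x3). x1 ^ i mod p) (\<lambda>_. 0)"
  by unfold_locales
    (use assms in \<open>simp_all add: power_fst_mulG_cong coprime_power_fst_G1 genA_def\<close>)

lemma G1_nearring_maps_square_product:
  assumes "prime p" and "odd p"
  shows "G1_nearring_maps p (\<lambda>(x1, x2, x3). x1\<^sup>2 mod p) (\<lambda>(x1, x2, x3). x1 * x2 mod p)"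
proof unfold_locales
  fix x y :: "int \<times> int \<times> int"
  obtain x1 x2 x3 y1 y2 y3 where xy: "x = (x1, x2, x3)" "y = (y1, y2, y3)"
    by (cases x; cases y)
  have "[(x1 * y1 mod p) * ((x2 * y1 + (x1\<^sup>2 mod p) * y2) mod p) = (x1 * y1) * (x2 * y1 + x1\<^sup>2 * y2)] (mod p)"
    by (intro cong_mult cong_add cong_mod_leftI cong_refl)
  also have "(x1 * y1) * (x2 * y1 + x1\<^sup>2 * y2) = (x1 * x2) * y1\<^sup>2 + x1 * x1\<^sup>2 * (y1 * y2)"
    by (simp add: algebra_simps power2_eq_square)
  also have "[\<dots> = (x1 * x2 mod p) * (y1\<^sup>2 mod p) + x1 * (x1\<^sup>2 mod p) * (y1 * y2 mod p)] (mod p)"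
    by (intro cong_mult cong_add cong_mod_rightI cong_refl)
  finally show "[(\<lambda>(x1, x2, x3). x1 * x2 mod p) (mulG p (\<lambda>(x1, x2, x3). x1\<^sup>2 mod p) (\<lambda>(x1, x2, x3). x1 * x2 mod p) x y)
      = (\<lambda>(x1, x2, x3). x1 * x2 mod p) x * (\<lambda>(x1, x2, x3). x1\<^sup>2 mod p) y
        + fst x * (\<lambda>(x1, x2, x3). x1\<^sup>2 mod p) x * (\<lambda>(x1, x2, x3). x1 * x2 mod p) y] (mod p)"
    by (simp only: xy mulG_def prod.case fst_conv cong_mod_left)
qed (use assms in \<open>simp_all add: power_fst_mulG_cong coprime_power_fst_G1 genA_def\<close>)

theorem lemma8:
  fixes p :: int
  assumes "prime p" and "odd p"
  shows "(\<forall>i::nat. 0 < i \<and> int i < p \<longrightarrow>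
            local_nearring_with_identity (G1 p) (addG p) zeroG
              (mulG p (\<lambda>(x1, x2, x3). x1 ^ i mod p) (\<lambda>_. 0)) genA)
       \<and> local_nearring_with_identity (G1 p) (addG p) zeroG
              (mulG p (\<lambda>_. 1) (\<lambda>_. 0)) genA
       \<and> local_nearring_with_identity (G1 p) (addG p) zeroG
              (mulG p (\<lambda>(x1, x2, x3). x1 ^ 2 mod p) (\<lambda>(x1, x2, x3). (x1 * x2) mod p)) genA"
proof (intro conjI allI impI)
  fix i :: nat
  show "local_nearring_with_identity (G1 p) (addG p) zeroG
      (mulG p (\<lambda>(x1, x2, x3). x1 ^ i mod p) (\<lambda>_. 0)) genA"
    using G1_nearring_maps_power[OF assms] by (rule G1_nearring_maps.local_nearring)
next
  have power_zero: "(\<lambda>(x1, x2, x3). x1 ^ 0 mod p) = (\<lambda>_. 1)"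
    using prime_gt_1_int[OF assms(1)] by auto
  have "G1_nearring_maps p (\<lambda>_. 1) (\<lambda>_. 0)"
    using G1_nearring_maps_power[OF assms, of 0] unfolding power_zero .
  then show "local_nearring_with_identity (G1 p) (addG p) zeroG (mulG p (\<lambda>_. 1) (\<lambda>_. 0)) genA"
    by (rule G1_nearring_maps.local_nearring)
next
  show "local_nearring_with_identity (G1 p) (addG p) zeroG
      (mulG p (\<lambda>(x1, x2, x3). x1 ^ 2 mod p) (\<lambda>(x1, x2, x3). (x1 * x2) mod p)) genA"
    using G1_nearring_maps_square_product[OF assms] by (rule G1_nearring_maps.local_nearring)
qed

end
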